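(* Consider the RIS-assisted localization model described in the context, with fixed known AoDs $(\theta_i,\phi_i)$, propagation gains $h_i\in\mathbb{C}$, RIS phase shifts $\varrho_i\in[0,2\pi]$, pilot vectors $\boldsymbol{x}(1),\dots,\boldsymbol{x}(L)\in\mathbb{C}^{N_{\mathrm{t}}}$ and noise variance $\sigma^2>0$, and let $\mathbf{J}_{\boldsymbol{q}}=\mathbf{T}\mathbf{J}_{\boldsymbol{\eta}}\mathbf{T}^{\mathrm{T}}\in\mathbb{R}^{2\times 2}$ be the Fisher information matrix of the MS position $\boldsymbol{q}_{1:2}=[q_x,q_y]^{\mathrm{T}}$ (assumed nonsingular). Then for $a,b\in\{1,2\}$, $$[\mathbf{J}_{\boldsymbol{q}}]_{a,b}=\sum_{l=1}^{L}\frac{2}{\sigma^2}\sum_{m=1}^{N}\sum_{n=1}^{N}\mathfrak{Re}\Big[e^{j(\varrho_n-\varrho_m)}\kappa^{a,b}_{m,n}(l)\Big],$$ where, writing $u^1=x$, $u^2=y$, $$\kappa^{a,b}_{m,n}(l)=\alpha_m^{u^a}\alpha_n^{u^b}\dot{\boldsymbol{\varpi}}_m^{\mathrm{H}}(l)\dot{\boldsymbol{\varpi}}_n(l)+\beta_m^{u^a}\alpha_n^{u^b}\ddot{\boldsymbol{\varpi}}_m^{\mathrm{H}}(l)\dot{\boldsymbol{\varpi}}_n(l)+\alpha_m^{u^a}\beta_n^{u^b}\dot{\boldsymbol{\varpi}}_m^{\mathrm{H}}(l)\ddot{\boldsymbol{\varpi}}_n(l)+\beta_m^{u^a}\beta_n^{u^b}\ddot{\boldsymbol{\varpi}}_m^{\mathrm{H}}(l)\ddot{\boldsymbol{\varpi}}_n(l),$$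 and consequently the Cramér–Rao lower bound for the estimate of the absolute MS position is $$\mathrm{CRLB}=\mathrm{Tr}\big(\mathbf{J}_{\boldsymbol{q}}^{-1}\big)=\frac{[\mathbf{J}_{\boldsymbol{q}}]_{1,1}+[\mathbf{J}_{\boldsymbol{q}}]_{2,2}}{[\mathbf{J}_{\boldsymbol{q}}]_{1,1}[\mathbf{J}_{\boldsymbol{q}}]_{2,2}-[\mathbf{J}_{\boldsymbol{q}}]_{1,2}[\mathbf{J}_{\boldsymbol{q}}]_{2,1}}.$$
   Context: Setting: a base station (BS) with $N_{\mathrm{t}}$ antennas at known position $\boldsymbol{p}=[p_x,p_y,0]^{\mathrm{T}}$, a mobile station (MS) with $N_{\mathrm{r}}$ antennas at unknown position $\boldsymbol{q}=[q_x,q_y,0]^{\mathrm{T}}$, and a reconfigurable intelligent surface (RIS) with $N$ reflecting elements at known positions $\boldsymbol{s}^i=[s^i_x,s^i_y,s^i_z]^{\mathrm{T}}$, $s^i_z>0$, $i=1,\dots,N$; the line of sight is blocked, so there are exactly $N$ paths, path $i$ going through element $i$. Path $i$ has known elevation/azimuth angle-of-departure $\theta_i,\phi_i$ and elevation/azimuth angle-of-arrival $\vartheta_i,\varphi_i$, which are functions of $\boldsymbol{q}_{1:2}$ given by $\vartheta_i=\arctan\big(\|\boldsymbol{q}_{1:2}-\boldsymbol{s}^i_{1:2}\|_2/s^i_z\big)$ and $\varphi_i=\arccos\big(-|q_x-s^i_x|/\|\boldsymbol{q}_{1:2}-\boldsymbol{s}^i_{1:2}\|_2\big)$ (assumed differentiable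 at the true $\boldsymbol{q}_{1:2}$). Let $k=2\pi d/\lambda$ ($d$ antenna spacing, $\lambda$ wavelength), $\xi_i=k\sin\vartheta_i\sin\varphi_i$, $\zeta_i=k\sin\theta_i\sin\phi_i$, $\mathbf{a}_{\mathrm{t}}(\theta_i,\phi_i)=[e^{j(n-1)\zeta_i}]_{n=1}^{N_{\mathrm{t}}}$, $\mathbf{a}_{\mathrm{r}}(\vartheta_i,\varphi_i)=[e^{j(m-1)\xi_i}]_{m=1}^{N_{\mathrm{r}}}$, $\mathbf{\Lambda}_{\mathrm{t}}=[\mathbf{a}_{\mathrm{t}}(\theta_1,\phi_1),\dots,\mathbf{a}_{\mathrm{t}}(\theta_N,\phi_N)]$, $\mathbf{\Lambda}_{\mathrm{r}}=[\mathbf{a}_{\mathrm{r}}(\vartheta_1,\varphi_1),\dots,\mathbf{a}_{\mathrm{r}}(\vartheta_N,\varphi_N)]$. The channel is $\tilde{\mathbf{H}}=\mathbf{\Lambda}_{\mathrm{r}}\,\mathrm{diag}(h_1,\dots,h_N)\,\mathrm{diag}(e^{j\varrho_1},\dots,e^{j\varrho_N})\,\mathbf{\Lambda}_{\mathrm{t}}^{\mathrm{H}}$. In time slot $l=1,\dots,L$ the MS receives $\boldsymbol{y}(l)=\tilde{\mathbf{H}}\boldsymbol{x}(l)+\boldsymbol{n}$ with noise entries i.i.d. $\mathcal{CN}(0,\sigma^2)$; write $\boldsymbol{\mu}(l)=\tilde{\mathbf{H}}\boldsymbol{x}(l)$. The unknown parameter vector is $\boldsymbol{\eta}=[\vartheta_1,\dots,\vartheta_N,\varphi_1,\dots,\varphi_N,h_1,\dots,h_N]^{\mathrm{T}}$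 and its Fisher information matrix is $[\mathbf{J}_{\boldsymbol{\eta}}]_{m,n}=\sum_{l=1}^{L}\frac{2}{\sigma^2}\mathfrak{Re}\big\{\frac{\partial\boldsymbol{\mu}^{\mathrm{H}}(l)}{\partial\eta_m}\frac{\partial\boldsymbol{\mu}(l)}{\partial\eta_n}\big\}$. The transformation matrix is $\mathbf{T}=\partial\boldsymbol{\eta}^{\mathrm{T}}/\partial\boldsymbol{q}_{1:2}\in\mathbb{R}^{2\times 3N}$, where the gains $h_i$ do not depend on $\boldsymbol{q}$ (so $\partial h_i/\partial\boldsymbol{q}_{1:2}=0$). Notation: $\alpha_i^x=\partial\vartheta_i/\partial q_x$, $\alpha_i^y=\partial\vartheta_i/\partial q_y$, $\beta_i^x=\partial\varphi_i/\partial q_x$, $\beta_i^y=\partial\varphi_i/\partial q_y$. Define $N_{\mathrm{r}}\times N_{\mathrm{t}}$ matrices $[\dot{\boldsymbol{\Xi}}_i]_{m,n}=h_i\,j(m-1)k\sin\varphi_i\cos\vartheta_i\,e^{j[(m-1)\xi_i+(1-n)\zeta_i]}$ and $[\ddot{\boldsymbol{\Xi}}_i]_{m,n}=h_i\,j(m-1)k\sin\vartheta_i\cos\varphi_i\,e^{j[(m-1)\xi_i+(1-n)\zeta_i]}$, and vectors $\dot{\boldsymbol{\varpi}}_i(l)=\dot{\boldsymbol{\Xi}}_i\boldsymbol{x}(l)$, $\ddot{\boldsymbol{\varpi}}_i(l)=\ddot{\boldsymbol{\Xi}}_i\boldsymbol{x}(l)$. The CRLB for the MS position estimate is defined as $\mathrm{Tr}(\mathbf{J}_{\boldsymbol{q}}^{-1})$.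 *)

theory Defs
  imports "HOL-Analysis.Analysis"
begin

text \<open>Conventions: antennas, paths, time slots and FIM indices are 1-based natural numbers.
  Vectors in C^K are functions nat => complex used on indices 1..K.\<close>

text \<open>Angles of arrival as functions of the MS position q = (qx, qy); RIS element i
  is at (sx i, sy i, sz i).\<close>
definition vtheta :: "(nat \<Rightarrow> real) \<Rightarrow> (nat \<Rightarrow> real) \<Rightarrow> (nat \<Rightarrow> real) \<Rightarrow> nat \<Rightarrow> real \<times> real \<Rightarrow> real" where
  "vtheta sx sy sz i q = arctan (sqrt ((fst q - sx i)^2 + (snd q - sy i)^2) / sz i)"

definition vphi :: "(nat \<Rightarrow> real) \<Rightarrow> (nat \<Rightarrow> real) \<Rightarrow> (nat \<Rightarrow> real) \<Rightarrow> nat \<Rightarrow> real \<times> real \<Rightarrow> real" where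
  "vphi sx sy sz i q = arccos (- \<bar>fst q - sx i\<bar> / sqrt ((fst q - sx i)^2 + (snd q - sy i)^2))"

definition pderiv2 :: "nat \<Rightarrow> (real \<times> real \<Rightarrow> real) \<Rightarrow> real \<times> real \<Rightarrow> real" where
  "pderiv2 a f q = (if a = 1 then deriv (\<lambda>t. f (t, snd q)) (fst q)
                    else deriv (\<lambda>t. f (fst q, t)) (snd q))"

definition cexpj :: "real \<Rightarrow> complex" where
  "cexpj t = exp (\<i> * complex_of_real t)"

text \<open>Noise-free received signal mu(l), component m, as a function of the
  unknown parameters (vt = varthetas, vp = varphis, h = gains).\<close>
definition mu ::
  "real \<Rightarrow> nat \<Rightarrow> nat \<Rightarrow> (nat \<Rightarrow> real) \<Rightarrow> (nat \<Rightarrow> real) \<Rightarrow> (nat \<Rightarrow> real) \<Rightarrow>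
   (nat \<Rightarrow> nat \<Rightarrow> complex) \<Rightarrow> (nat \<Rightarrow> real) \<Rightarrow> (nat \<Rightarrow> real) \<Rightarrow> (nat \<Rightarrow> complex) \<Rightarrow>
   nat \<Rightarrow> nat \<Rightarrow> complex" where
  "mu k N Nt th ph rho x vt vp h l m =
     (\<Sum>n=1..Nt. (\<Sum>i=1..N.
        cexpj (real (m - 1) * (k * sin (vt i) * sin (vp i))) * h i * cexpj (rho i)
        * cnj (cexpj (real (n - 1) * (k * sin (th i) * sin (ph i))))) * x l n)"

text \<open>Partial derivative of mu(l)_m w.r.t. eta_p, where
  eta = [vartheta_1..vartheta_N, varphi_1..varphi_N, h_1..h_N]; derivatives w.r.t.
  the complex gains are complex derivatives.\<close>
definition dmu ::
  "real \<Rightarrow> nat \<Rightarrow> nat \<Rightarrow> (nat \<Rightarrow> real) \<Rightarrow> (nat \<Rightarrow> real) \<Rightarrow> (nat \<Rightarrow> real) \<Rightarrow>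
   (nat \<Rightarrow> nat \<Rightarrow> complex) \<Rightarrow> (nat \<Rightarrow> real) \<Rightarrow> (nat \<Rightarrow> real) \<Rightarrow> (nat \<Rightarrow> complex) \<Rightarrow>
   nat \<Rightarrow> nat \<Rightarrow> nat \<Rightarrow> complex" where
  "dmu k N Nt th ph rho x vt vp h p l m =
     (if p \<le> N then
        vector_derivative (\<lambda>t. mu k N Nt th ph rho x (vt(p := t)) vp h l m) (at (vt p))
      else if p \<le> 2 * N then
        vector_derivative (\<lambda>t. mu k N Nt th ph rho x vt (vp((p - N) := t)) h l m) (at (vp (p - N)))
      else
        deriv (\<lambda>z. mu k N Nt th ph rho x vt vp (h((p - 2 * N) := z)) l m) (h (p - 2 * N)))"

definition Jeta ::
  "real \<Rightarrow> nat \<Rightarrow> nat \<Rightarrow> nat \<Rightarrow> nat \<Rightarrow> real \<Rightarrow> (nat \<Rightarrow> real) \<Rightarrow> (nat \<Rightarrow> real) \<Rightarrow> (nat \<Rightarrow> real) \<Rightarrow>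
   (nat \<Rightarrow> nat \<Rightarrow> complex) \<Rightarrow> (nat \<Rightarrow> real) \<Rightarrow> (nat \<Rightarrow> real) \<Rightarrow> (nat \<Rightarrow> complex) \<Rightarrow>
   nat \<Rightarrow> nat \<Rightarrow> real" where
  "Jeta k N Nt Nr L sigma2 th ph rho x vt vp h p p' =
     (\<Sum>l=1..L. 2 / sigma2 * Re (\<Sum>m=1..Nr.
        cnj (dmu k N Nt th ph rho x vt vp h p l m) * dmu k N Nt th ph rho x vt vp h p' l m))"

definition Tmat ::
  "nat \<Rightarrow> (nat \<Rightarrow> real) \<Rightarrow> (nat \<Rightarrow> real) \<Rightarrow> (nat \<Rightarrow> real) \<Rightarrow> real \<times> real \<Rightarrow> nat \<Rightarrow> nat \<Rightarrow> real" where
  "Tmat N sx sy sz q a p =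
     (if p \<le> N then pderiv2 a (vtheta sx sy sz p) q
      else if p \<le> 2 * N then pderiv2 a (vphi sx sy sz (p - N)) q
      else 0)"

definition idx2 :: "2 \<Rightarrow> nat" where
  "idx2 a = (if a = 1 then 1 else 2)"

definition Jq ::
  "real \<Rightarrow> nat \<Rightarrow> nat \<Rightarrow> nat \<Rightarrow> nat \<Rightarrow> real \<Rightarrow> (nat \<Rightarrow> real) \<Rightarrow> (nat \<Rightarrow> real) \<Rightarrow> (nat \<Rightarrow> real) \<Rightarrow>
   (nat \<Rightarrow> nat \<Rightarrow> complex) \<Rightarrow> (nat \<Rightarrow> real) \<Rightarrow> (nat \<Rightarrow> real) \<Rightarrow> (nat \<Rightarrow> real) \<Rightarrow>
   (nat \<Rightarrow> complex) \<Rightarrow> real \<times> real \<Rightarrow> real^2^2" where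
  "Jq k N Nt Nr L sigma2 th ph rho x sx sy sz h q =
     (\<chi> a b. (\<Sum>p=1..3*N. \<Sum>p'=1..3*N.
          Tmat N sx sy sz q (idx2 a) p
          * Jeta k N Nt Nr L sigma2 th ph rho x
              (\<lambda>i. vtheta sx sy sz i q) (\<lambda>i. vphi sx sy sz i q) h p p'
          * Tmat N sx sy sz q (idx2 b) p'))"

definition XiDot ::
  "real \<Rightarrow> (nat \<Rightarrow> real) \<Rightarrow> (nat \<Rightarrow> real) \<Rightarrow> (nat \<Rightarrow> real) \<Rightarrow> (nat \<Rightarrow> real) \<Rightarrow> (nat \<Rightarrow> complex) \<Rightarrow>
   nat \<Rightarrow> nat \<Rightarrow> nat \<Rightarrow> complex" where
  "XiDot k th ph vt vp h i m n =
     h i * \<i> * complex_of_real (real (m - 1) * k * sin (vp i) * cos (vt i))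
     * cexpj (real (m - 1) * (k * sin (vt i) * sin (vp i))
              + (1 - real n) * (k * sin (th i) * sin (ph i)))"

definition XiDDot ::
  "real \<Rightarrow> (nat \<Rightarrow> real) \<Rightarrow> (nat \<Rightarrow> real) \<Rightarrow> (nat \<Rightarrow> real) \<Rightarrow> (nat \<Rightarrow> real) \<Rightarrow> (nat \<Rightarrow> complex) \<Rightarrow>
   nat \<Rightarrow> nat \<Rightarrow> nat \<Rightarrow> complex" where
  "XiDDot k th ph vt vp h i m n =
     h i * \<i> * complex_of_real (real (m - 1) * k * sin (vt i) * cos (vp i))
     * cexpj (real (m - 1) * (k * sin (vt i) * sin (vp i))
              + (1 - real n) * (k * sin (th i) * sin (ph i)))"

definition matvec :: "nat \<Rightarrow> (nat \<Rightarrow> nat \<Rightarrow> complex) \<Rightarrow> (nat \<Rightarrow> complex) \<Rightarrow> nat \<Rightarrow> complex" where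
  "matvec Nt A v m = (\<Sum>n=1..Nt. A m n * v n)"

definition hinner :: "nat \<Rightarrow> (nat \<Rightarrow> complex) \<Rightarrow> (nat \<Rightarrow> complex) \<Rightarrow> complex" where
  "hinner Nr u v = (\<Sum>r=1..Nr. cnj (u r) * v r)"

end

theory Submission
  imports Defs
begin

(*
  Entry (a,b) of T J_eta T^T is a weighted Gram form: it equals
  sum_l 2/sigma^2 Re <D_a mu(l), D_b mu(l)> with D_c mu = sum_p T_cp d mu / d eta_p.
  The gain block of T vanishes, and mu depends on vartheta_i, varphi_i only through the
  receive phase of path i, so d mu / d vartheta_i = e^(j rho_i) wD_i and
  d mu / d varphi_i = e^(j rho_i) wDD_i.  Hence D_c mu = sum_i e^(j rho_i) (alpha_ci wD_i + beta_ci wDD_i),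
  and expanding the Hermitian product yields the kappa terms.  The CRLB formula is the
  trace of the adjugate form of a 2x2 inverse.
  Because alpha and beta are defined with deriv, the entry formula needs none of the
  differentiability hypotheses; only invertibility of J_q is used.
*)

lemma cexpj_add: "cexpj a * cexpj b = cexpj (a + b)"
  by (simp add: cexpj_def exp_add[symmetric] algebra_simps)

lemma cnj_cexpj: "cnj (cexpj a) = cexpj (- a)"
  by (simp add: cexpj_def exp_cnj)

lemma cnj_cexpj_mult: "cnj (cexpj a) * cexpj b = cexpj (b - a)"
  by (simp add: cnj_cexpj cexpj_add)

lemma has_vector_derivative_cexpj:
  assumes "(u has_real_derivative u') (at t)"
  shows "((\<lambda>t. cexpj (u t)) has_vector_derivative (\<i> * of_real u' * cexpj (u t))) (at t)"
proof -
  have "((\<lambda>t. \<i> * of_real (u t)) has_vector_derivative (\<i> * of_real u')) (at t)"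
    using assms by (auto intro!: derivative_eq_intros)
  from field_vector_diff_chain_at[OF this DERIV_exp] show ?thesis
    by (simp add: cexpj_def o_def)
qed

lemma has_vector_derivative_sum_phase_update:
  fixes c :: "nat \<Rightarrow> complex"
  assumes "finite I" "p \<in> I" "(g has_real_derivative g') (at t)"
  shows "((\<lambda>t. \<Sum>i\<in>I. cexpj (r * (\<xi>(p := g t)) i) * c i) has_vector_derivative
           (\<i> * of_real (r * g') * cexpj (r * g t) * c p)) (at t)"
proof -
  have split: "(\<Sum>i\<in>I. cexpj (r * (\<xi>(p := g t)) i) * c i)
      = cexpj (r * g t) * c p + (\<Sum>i\<in>I - {p}. cexpj (r * \<xi> i) * c i)" for t
    using assms(1,2) by (simp add: sum.remove)
  have "((\<lambda>t. r * g t) has_real_derivative r * g') (at t)"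
    using assms(3) by (auto intro!: derivative_eq_intros)
  from has_vector_derivative_mult[OF has_vector_derivative_cexpj[OF this] has_vector_derivative_const[of "c p"]]
  show ?thesis
    unfolding split has_vector_derivative_add_const by (simp add: mult_ac)
qed

(* mu sees vt and vp only through the receive phases k sin (vt i) sin (vp i);
   hypothesis phase says that the perturbation moves the phase of path p alone. *)

lemma mu_has_vector_derivative_path_phase:
  assumes p: "p \<in> {1..N}"
    and phase: "\<And>s. (\<lambda>i. k * sin (vt' s i) * sin (vp' s i)) = (\<lambda>i. k * sin (vt i) * sin (vp i))(p := g s)"
    and g: "(g has_real_derivative g') (at s0)" and g0: "g s0 = k * sin (vt p) * sin (vp p)"
  shows "((\<lambda>s. mu k N Nt th ph rho x (vt' s) (vp' s) h l m) has_vector_derivative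
           cexpj (rho p) * (\<Sum>n=1..Nt. h p * \<i> * of_real (real (m - 1) * g')
             * cexpj (real (m - 1) * (k * sin (vt p) * sin (vp p)) + (1 - real n) * (k * sin (th p) * sin (ph p)))
             * x l n)) (at s0)"
proof -
  define \<xi> where "\<xi> i = k * sin (vt i) * sin (vp i)" for i
  define c where "c n i = h i * cexpj (rho i) * cnj (cexpj (real (n - 1) * (k * sin (th i) * sin (ph i))))" for n i
  have mu_eq: "mu k N Nt th ph rho x (vt' s) (vp' s) h l m
      = (\<Sum>n=1..Nt. (\<Sum>i=1..N. cexpj (real (m - 1) * (\<xi>(p := g s)) i) * c n i) * x l n)" for s
    unfolding mu_def c_def \<xi>_def phase[symmetric] by (simp add: mult.assoc)
  have "((\<lambda>s. mu k N Nt th ph rho x (vt' s) (vp' s) h l m) has_vector_derivative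
      (\<Sum>n=1..Nt. \<i> * of_real (real (m - 1) * g') * cexpj (real (m - 1) * g s0) * c n p * x l n)) (at s0)"
    unfolding mu_eq
    by (intro has_vector_derivative_sum has_vector_derivative_mult[where g'=0, simplified]
        has_vector_derivative_sum_phase_update p g has_vector_derivative_const finite_atLeastAtMost)
  moreover have "cexpj (real (m - 1) * g s0) * c n p
      = cexpj (rho p) * h p * cexpj (real (m - 1) * (k * sin (vt p) * sin (vp p)) + (1 - real n) * (k * sin (th p) * sin (ph p)))"
    if "n \<in> {1..Nt}" for n
  proof -
    have "cexpj (real (m - 1) * g s0) * cnj (cexpj (real (n - 1) * (k * sin (th p) * sin (ph p))))
        = cexpj (real (m - 1) * (k * sin (vt p) * sin (vp p)) + (1 - real n) * (k * sin (th p) * sin (ph p)))"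
      using that unfolding g0 cnj_cexpj cexpj_add by (simp add: of_nat_diff algebra_simps)
    then show ?thesis
      unfolding c_def by (simp add: ac_simps)
  qed
  then have "\<i> * of_real (real (m - 1) * g') * cexpj (real (m - 1) * g s0) * c n p * x l n
      = cexpj (rho p) * (h p * \<i> * of_real (real (m - 1) * g')
          * cexpj (real (m - 1) * (k * sin (vt p) * sin (vp p)) + (1 - real n) * (k * sin (th p) * sin (ph p)))
          * x l n)"
    if "n \<in> {1..Nt}" for n
    using that by (simp only: mult.assoc) (simp only: ac_simps)
  ultimately show ?thesis
    by (simp only: sum_distrib_left cong: sum.cong)
qed

lemma dmu_vartheta:
  assumes p: "p \<in> {1..N}"
  shows "dmu k N Nt th ph rho x vt vp h p l m = cexpj (rho p) * matvec Nt (XiDot k th ph vt vp h p) (x l) m"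
proof -
  have "((\<lambda>t. mu k N Nt th ph rho x (vt(p := t)) vp h l m) has_vector_derivative
          cexpj (rho p) * (\<Sum>n=1..Nt. h p * \<i> * of_real (real (m - 1) * (k * sin (vp p) * cos (vt p)))
            * cexpj (real (m - 1) * (k * sin (vt p) * sin (vp p)) + (1 - real n) * (k * sin (th p) * sin (ph p)))
            * x l n)) (at (vt p))"
    by (rule mu_has_vector_derivative_path_phase[OF p, where g = "\<lambda>t. k * sin t * sin (vp p)"])
      (auto intro!: derivative_eq_intros)
  then show ?thesis
    using p unfolding dmu_def matvec_def XiDot_def by (simp add: vector_derivative_at mult.assoc)
qed

lemma dmu_varphi:
  assumes p: "p \<in> {1..N}"
  shows "dmu k N Nt th ph rho x vt vp h (N + p) l m = cexpj (rho p) * matvec Nt (XiDDot k th ph vt vp h p) (x l) m"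
proof -
  have "((\<lambda>t. mu k N Nt th ph rho x vt (vp(p := t)) h l m) has_vector_derivative
          cexpj (rho p) * (\<Sum>n=1..Nt. h p * \<i> * of_real (real (m - 1) * (k * sin (vt p) * cos (vp p)))
            * cexpj (real (m - 1) * (k * sin (vt p) * sin (vp p)) + (1 - real n) * (k * sin (th p) * sin (ph p)))
            * x l n)) (at (vp p))"
    by (rule mu_has_vector_derivative_path_phase[OF p, where g = "\<lambda>t. k * sin (vt p) * sin t"])
      (auto intro!: derivative_eq_intros)
  then show ?thesis
    using p unfolding dmu_def matvec_def XiDDot_def by (simp add: vector_derivative_at mult.assoc)
qed

lemma Tmat_vartheta: "i \<in> {1..N} \<Longrightarrow> Tmat N sx sy sz q a i = pderiv2 a (vtheta sx sy sz i) q"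
  and Tmat_varphi: "i \<in> {1..N} \<Longrightarrow> Tmat N sx sy sz q a (N + i) = pderiv2 a (vphi sx sy sz i) q"
  and Tmat_gain: "i \<in> {1..N} \<Longrightarrow> Tmat N sx sy sz q a (2 * N + i) = 0"
  by (simp_all add: Tmat_def)

lemma sum_three_blocks:
  fixes f :: "nat \<Rightarrow> 'a::comm_monoid_add"
  shows "(\<Sum>p=1..3*N. f p) = (\<Sum>i=1..N. f i + f (N + i) + f (2 * N + i))"
proof -
  have three_N: "3 * N = N + (N + N)"
    by simp
  have "(\<Sum>p=1..3*N. f p) = (\<Sum>p=1..N. f p) + (\<Sum>p=N+1..N+(N+N). f p)"
    unfolding three_N by (rule sum.ub_add_nat) simp
  also have "(\<Sum>p=N+1..N+(N+N). f p) = (\<Sum>p=N+1..N+N. f p) + (\<Sum>p=N+N+1..N+N+N. f p)"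
    using sum.ub_add_nat[of "N+1" "N+N" f N] by (simp add: add.assoc)
  also have "(\<Sum>p=N+1..N+N. f p) = (\<Sum>i=1..N. f (N + i))"
    using sum.shift_bounds_cl_nat_ivl[of f 1 N N] by (simp add: add.commute)
  also have "(\<Sum>p=N+N+1..N+N+N. f p) = (\<Sum>i=1..N. f (2 * N + i))"
    using sum.shift_bounds_cl_nat_ivl[of f 1 "N+N" N] by (simp add: add.commute mult_2)
  finally show ?thesis
    by (simp add: sum.distrib add.assoc)
qed

lemma hinner_sum_sum:
  "hinner n (\<lambda>r. \<Sum>i\<in>I. f i r) (\<lambda>r. \<Sum>j\<in>J. g j r) = (\<Sum>i\<in>I. \<Sum>j\<in>J. hinner n (f i) (g j))"
proof -
  have "hinner n (\<lambda>r. \<Sum>i\<in>I. f i r) (\<lambda>r. \<Sum>j\<in>J. g j r) = (\<Sum>r=1..n. \<Sum>i\<in>I. \<Sum>j\<in>J. cnj (f i r) * g j r)"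
    unfolding hinner_def by (simp add: sum_product)
  also have "\<dots> = (\<Sum>i\<in>I. \<Sum>r=1..n. \<Sum>j\<in>J. cnj (f i r) * g j r)"
    by (rule sum.swap)
  also have "\<dots> = (\<Sum>i\<in>I. \<Sum>j\<in>J. \<Sum>r=1..n. cnj (f i r) * g j r)"
    by (rule sum.cong[OF refl], rule sum.swap)
  finally show ?thesis
    unfolding hinner_def .
qed

lemma hinner_scaled: "hinner n (\<lambda>r. a * u r) (\<lambda>r. b * v r) = cnj a * b * hinner n u v"
  unfolding hinner_def by (simp add: sum_distrib_left mult_ac)

lemma hinner_linear_combination:
  "hinner n (\<lambda>r. c * (of_real a * u r + of_real b * v r)) (\<lambda>r. c' * (of_real a' * u' r + of_real b' * v' r))
   = cnj c * c' * (of_real (a * a') * hinner n u u' + of_real (b * a') * hinner n v u'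
                   + of_real (a * b') * hinner n u v' + of_real (b * b') * hinner n v v')"
  unfolding hinner_def by (simp add: sum_distrib_left sum.distrib algebra_simps)

lemma sum_sum_weighted_Re_hinner:
  fixes t u :: "'p \<Rightarrow> real" and d :: "'p \<Rightarrow> 'l \<Rightarrow> nat \<Rightarrow> complex"
  shows "(\<Sum>p\<in>P. \<Sum>p'\<in>P. t p * (\<Sum>l\<in>\<Lambda>. c * Re (hinner n (d p l) (d p' l))) * u p')
       = (\<Sum>l\<in>\<Lambda>. c * Re (hinner n (\<lambda>r. \<Sum>p\<in>P. of_real (t p) * d p l r) (\<lambda>r. \<Sum>p'\<in>P. of_real (u p') * d p' l r)))"
proof -
  have "(\<Sum>p\<in>P. \<Sum>p'\<in>P. t p * (\<Sum>l\<in>\<Lambda>. c * Re (hinner n (d p l) (d p' l))) * u p')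
      = (\<Sum>p\<in>P. \<Sum>p'\<in>P. \<Sum>l\<in>\<Lambda>. c * (t p * u p' * Re (hinner n (d p l) (d p' l))))"
    by (simp add: sum_distrib_left sum_distrib_right mult_ac)
  also have "\<dots> = (\<Sum>l\<in>\<Lambda>. \<Sum>p\<in>P. \<Sum>p'\<in>P. c * (t p * u p' * Re (hinner n (d p l) (d p' l))))"
    by (subst sum.swap) (simp add: sum.swap[of _ \<Lambda>])
  also have "\<dots> = (\<Sum>l\<in>\<Lambda>. c * Re (hinner n (\<lambda>r. \<Sum>p\<in>P. of_real (t p) * d p l r) (\<lambda>r. \<Sum>p'\<in>P. of_real (u p') * d p' l r)))"
    by (simp add: hinner_sum_sum hinner_scaled sum_distrib_left)
  finally show ?thesis .
qed

lemma matrix_inv_eq_left_inverse: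
  fixes A B :: "'a::comm_ring_1^'n^'n"
  assumes "invertible A" and "B ** A = mat 1"
  shows "matrix_inv A = B"
proof -
  have "A ** matrix_inv A = mat 1"
    using someI_ex[OF assms(1)[unfolded invertible_def]] unfolding matrix_inv_def by blast
  then have "(B ** A) ** matrix_inv A = B"
    by (simp add: matrix_mul_assoc[symmetric] matrix_mul_rid)
  then show ?thesis
    using assms(2) by (simp add: matrix_mul_lid)
qed

lemma trace_matrix_inv_2x2:
  fixes J :: "real^2^2"
  assumes "invertible J"
  shows "trace (matrix_inv J) = (J $ 1 $ 1 + J $ 2 $ 2) / (J $ 1 $ 1 * J $ 2 $ 2 - J $ 1 $ 2 * J $ 2 $ 1)"
proof -
  define d where "d = J $ 1 $ 1 * J $ 2 $ 2 - J $ 1 $ 2 * J $ 2 $ 1"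
  have "d \<noteq> 0"
    using invertible_det_nz[of J] assms det_2[of J] d_def by simp
  define M :: "real^2^2" where
    "M = (\<chi> i j. (if i = 1 \<and> j = 1 then J $ 2 $ 2 else if i = 2 \<and> j = 2 then J $ 1 $ 1 else - J $ i $ j) / d)"
  have "M ** J = mat 1"
    using \<open>d \<noteq> 0\<close> unfolding matrix_matrix_mult_def M_def mat_def d_def
    by (simp add: vec_eq_iff forall_2 sum_2 divide_simps)
  then have "matrix_inv J = M"
    by (rule matrix_inv_eq_left_inverse[OF assms])
  then show ?thesis
    unfolding trace_def M_def d_def
    by (simp add: sum_2 add_divide_distrib)
qed

lemma Jq_entry:
  fixes k sigma2 :: real and N Nt Nr L :: nat
    and th ph rho sx sy sz :: "nat \<Rightarrow> real"
    and h :: "nat \<Rightarrow> complex" and x :: "nat \<Rightarrow> nat \<Rightarrow> complex"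
    and q :: "real \<times> real" and a b :: 2
  defines "alpha \<equiv> \<lambda>c i. pderiv2 c (vtheta sx sy sz i) q"
    and "beta \<equiv> \<lambda>c i. pderiv2 c (vphi sx sy sz i) q"
    and "wD \<equiv> \<lambda>i l. matvec Nt (XiDot k th ph (\<lambda>i. vtheta sx sy sz i q) (\<lambda>i. vphi sx sy sz i q) h i) (x l)"
    and "wDD \<equiv> \<lambda>i l. matvec Nt (XiDDot k th ph (\<lambda>i. vtheta sx sy sz i q) (\<lambda>i. vphi sx sy sz i q) h i) (x l)"
  shows "Jq k N Nt Nr L sigma2 th ph rho x sx sy sz h q $ a $ b =
    (\<Sum>l=1..L. 2 / sigma2 * (\<Sum>m=1..N. \<Sum>n=1..N. Re (cexpj (rho n - rho m) *
        (complex_of_real (alpha (idx2 a) m * alpha (idx2 b) n) * hinner Nr (wD m l) (wD n l)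
       + complex_of_real (beta (idx2 a) m * alpha (idx2 b) n) * hinner Nr (wDD m l) (wD n l)
       + complex_of_real (alpha (idx2 a) m * beta (idx2 b) n) * hinner Nr (wD m l) (wDD n l)
       + complex_of_real (beta (idx2 a) m * beta (idx2 b) n) * hinner Nr (wDD m l) (wDD n l)))))"
proof -
  define vt where "vt i = vtheta sx sy sz i q" for i
  define vp where "vp i = vphi sx sy sz i q" for i
  define T where "T c p = Tmat N sx sy sz q c p" for c p
  define D where "D p l r = dmu k N Nt th ph rho x vt vp h p l r" for p l r
  define S where "S c i l r = cexpj (rho i) * (of_real (alpha c i) * wD i l r + of_real (beta c i) * wDD i l r)"
    for c i l r
  have position_derivative: "(\<Sum>p=1..3*N. of_real (T c p) * D p l r) = (\<Sum>i=1..N. S c i l r)" for c l r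
    unfolding sum_three_blocks
  proof (rule sum.cong[OF refl])
    fix i assume i: "i \<in> {1..N}"
    show "of_real (T c i) * D i l r + of_real (T c (N + i)) * D (N + i) l r
        + of_real (T c (2 * N + i)) * D (2 * N + i) l r = S c i l r"
      using i unfolding T_def D_def S_def wD_def wDD_def alpha_def beta_def vt_def[abs_def] vp_def[abs_def]
      by (simp add: Tmat_vartheta Tmat_varphi Tmat_gain dmu_vartheta dmu_varphi) (simp add: algebra_simps)
  qed
  have "Jq k N Nt Nr L sigma2 th ph rho x sx sy sz h q $ a $ b
      = (\<Sum>p=1..3*N. \<Sum>p'=1..3*N. T (idx2 a) p * (\<Sum>l=1..L. 2 / sigma2 * Re (hinner Nr (D p l) (D p' l)))
          * T (idx2 b) p')"
    unfolding Jq_def Jeta_def hinner_def T_def D_def vt_def vp_def by simp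
  also have "\<dots> = (\<Sum>l=1..L. 2 / sigma2 * Re (hinner Nr (\<lambda>r. \<Sum>p=1..3*N. of_real (T (idx2 a) p) * D p l r)
      (\<lambda>r. \<Sum>p'=1..3*N. of_real (T (idx2 b) p') * D p' l r)))"
    by (rule sum_sum_weighted_Re_hinner)
  also have "\<dots> = (\<Sum>l=1..L. 2 / sigma2 * Re (hinner Nr (\<lambda>r. \<Sum>i=1..N. S (idx2 a) i l r)
      (\<lambda>r. \<Sum>j=1..N. S (idx2 b) j l r)))"
    by (simp only: position_derivative)
  finally show ?thesis
    unfolding hinner_sum_sum S_def hinner_linear_combination cnj_cexpj_mult by simp
qed

theorem mainTheorem1:
  fixes k sigma2 :: real and N Nt Nr L :: nat
    and th ph rho sx sy sz :: "nat \<Rightarrow> real"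
    and h :: "nat \<Rightarrow> complex" and x :: "nat \<Rightarrow> nat \<Rightarrow> complex"
    and q :: "real \<times> real"
  assumes sigma_pos: "sigma2 > 0"
    and sz_pos: "\<forall>i\<in>{1..N}. sz i > 0"
    and rho_range: "\<forall>i\<in>{1..N}. rho i \<in> {0..2 * pi}"
    and diff_vtheta: "\<forall>i\<in>{1..N}. vtheta sx sy sz i differentiable (at q)"
    and diff_vphi: "\<forall>i\<in>{1..N}. vphi sx sy sz i differentiable (at q)"
    and nonsing: "invertible (Jq k N Nt Nr L sigma2 th ph rho x sx sy sz h q)"
  shows
    "(let J = Jq k N Nt Nr L sigma2 th ph rho x sx sy sz h q;
          vt = (\<lambda>i. vtheta sx sy sz i q);
          vp = (\<lambda>i. vphi sx sy sz i q);
          alpha = (\<lambda>a i. pderiv2 a (vtheta sx sy sz i) q);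
          beta = (\<lambda>a i. pderiv2 a (vphi sx sy sz i) q);
          wD = (\<lambda>i l. matvec Nt (XiDot k th ph vt vp h i) (x l));
          wDD = (\<lambda>i l. matvec Nt (XiDDot k th ph vt vp h i) (x l));
          kappa = (\<lambda>a b m n l.
              complex_of_real (alpha a m * alpha b n) * hinner Nr (wD m l) (wD n l)
            + complex_of_real (beta a m * alpha b n) * hinner Nr (wDD m l) (wD n l)
            + complex_of_real (alpha a m * beta b n) * hinner Nr (wD m l) (wDD n l)
            + complex_of_real (beta a m * beta b n) * hinner Nr (wDD m l) (wDD n l))
      in (\<forall>a b :: 2. J $ a $ b =
            (\<Sum>l=1..L. 2 / sigma2 * (\<Sum>m=1..N. \<Sum>n=1..N.
               Re (cexpj (rho n - rho m) * kappa (idx2 a) (idx2 b) m n l))))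
       \<and> trace (matrix_inv J) =
           (J $ 1 $ 1 + J $ 2 $ 2) / (J $ 1 $ 1 * J $ 2 $ 2 - J $ 1 $ 2 * J $ 2 $ 1))"
  unfolding Let_def by (intro conjI allI Jq_entry trace_matrix_inv_2x2 nonsing)

end
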